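(* Work in Scenario 2 with a common prior. For a mechanism $(\mathbf x,\mathbf p)$, bidder $i$ and $\hat t_i\in T_i$, let $y_i(\hat t_i)=\mathbb E_{\mathbf t_{-i}}[x_i(\hat t_i,\mathbf t_{-i})]$, $q_i(\hat t_i)=\mathbb E_{\mathbf t_{-i}}[p_i(\hat t_i,\mathbf t_{-i})]$ and $e_i(\hat t_i)=\sum_{j\ne i}\mathbb E_{\mathbf t_{-i}}[\eta_{i\leftarrow j}\,x_j(\hat t_i,\mathbf t_{-i})]$ (here $\eta_{i\leftarrow j}$ is a coordinate of $t_j$), so that $V_i(\hat t_i;t_i)=v_iy_i(\hat t_i)-e_i(\hat t_i)-q_i(\hat t_i)$. (a) If $(\mathbf x,\mathbf p)$ is BNIC then for each $i\in N$: there is a non-decreasing $\tilde y_i:[\underline v_i,\bar v_i]\to[0,1]$ such that $y_i(v_i,\boldsymbol\eta)=\tilde y_i(v_i)$ for all $\boldsymbol\eta\in\prod_{j\ne i}[\underline\eta_{j\leftarrow i},\bar\eta_{j\leftarrow i}]$ and all but countably many $v_i$; $V_i(t_i;t_i)$ depends only on $v_i$, say $V_i(t_i;t_i)=\widetilde V_i(v_i)$; and for every $t_i=(v_i,\boldsymbol\eta)\in T_i$, $$q_i(t_i)=v_i\,y_i(t_i)-\int_{\underline v_i}^{v_i}\tilde y_i(v)\,dv-e_i(t_i)-\widetilde V_i(\underline v_i).$$ (b) Conversely, if for each $i$ there are a non-decreasing $\tilde y_i:[\underline v_i,\bar v_i]\to[0,1]$ with $y_i(v_i,\boldsymbol\eta)=\tilde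 y_i(v_i)$ for all $(v_i,\boldsymbol\eta)\in T_i$, and a constant $C_i$ with $q_i(t_i)=v_i\tilde y_i(v_i)-\int_{\underline v_i}^{v_i}\tilde y_i(v)\,dv-e_i(t_i)-C_i$ for all $t_i\in T_i$, then $(\mathbf x,\mathbf p)$ is BNIC.
   Context: Model: there are $n$ bidders $N=\{1,\dots,n\}$ and a seller of a freely replicable good; an allocation is any $\mathbf x\in[0,1]^n$. Bidder $i$ has value $v_i\in[\underline v_i,\bar v_i]\subset\mathbb R_{\ge0}$ and for $j\ne i$ parameters $\eta_{i\leftarrow j}\in[\underline\eta_{i\leftarrow j},\bar\eta_{i\leftarrow j}]\subset\mathbb R_{\ge0}$; valuation $\nu_i(\mathbf x)=v_ix_i-\sum_{j\ne i}\eta_{i\leftarrow j}x_j$, utility $\nu_i(\mathbf x)-p_i$. In Scenario 2, bidder $i$'s private type is $t_i=(v_i,(\eta_{j\leftarrow i})_{j\ne i})\in T_i=[\underline v_i,\bar v_i]\times\prod_{j\ne i}[\underline\eta_{j\leftarrow i},\bar\eta_{j\leftarrow i}]$. Bids lie in $B_i=T_i\cup\{\emptyset\}$; a mechanism is $\mathbf x:B\to[0,1]^n$, $\mathbf p:B\to\mathbb R^n_{\ge0}$ with $x_i=p_i=0$ when $i$ bids $\emptyset$. Common prior: types $t_i\sim F_i$ independent across bidders; $\mathbb E_{\mathbf t_{-i}}$ is expectation over $\mathbf t_{-i}\sim\prod_{j\ne i}F_j$. Interim utility: $V_i(\hat t_i;t_i)=\mathbb E[u_i(\mathbf x(\hat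 t_i,\mathbf t_{-i}),p_i(\hat t_i,\mathbf t_{-i});\mathbf t)\mid t_i]$ (others truthful). BNIC: $V_i(t_i;t_i)\ge V_i(\hat t_i;t_i)$ for all $i$ and $t_i,\hat t_i\in T_i$. *)

theory Defs
  imports "HOL-Probability.Probability"
begin

text \<open>A type of bidder i is a pair (v, eta)
 where v is the value v_i and eta j = eta_{j<-i} for j in N - {i}
 (extensional: eta j = undefined outside N - {i}).
 A type profile is a function nat => btype (only the values on N matter).
 Bounds: vl i, vh i for v_i; el j i, eh j i for eta_{j<-i}.\<close>

type_synonym btype = "real \<times> (nat \<Rightarrow> real)"
type_synonym profile = "nat \<Rightarrow> btype"

definition Eta_set :: "nat \<Rightarrow> (nat \<Rightarrow> nat \<Rightarrow> real) \<Rightarrow> (nat \<Rightarrow> nat \<Rightarrow> real) \<Rightarrow> nat \<Rightarrow> (nat \<Rightarrow> real) set" where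
  "Eta_set n el eh i = (\<Pi>\<^sub>E j\<in>{..<n} - {i}. {el j i .. eh j i})"

definition type_set :: "nat \<Rightarrow> (nat \<Rightarrow> real) \<Rightarrow> (nat \<Rightarrow> real) \<Rightarrow> (nat \<Rightarrow> nat \<Rightarrow> real) \<Rightarrow> (nat \<Rightarrow> nat \<Rightarrow> real) \<Rightarrow> nat \<Rightarrow> btype set" where
  "type_set n vl vh el eh i = {vl i .. vh i} \<times> Eta_set n el eh i"

definition Eoth :: "nat \<Rightarrow> (nat \<Rightarrow> btype measure) \<Rightarrow> nat \<Rightarrow> (profile \<Rightarrow> real) \<Rightarrow> btype \<Rightarrow> real" where
  "Eoth n F i f th = (\<integral>s. f (s(i := th)) \<partial>(PiM ({..<n} - {i}) F))"

text \<open>Interim utility V_i(th; t) of bidder i with true type t reporting th, others truthful.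
 The utility is v_i x_i - sum_{j<>i} eta_{i<-j} x_j - p_i, where eta_{i<-j} = snd (t_j) i.\<close>
definition interim_util :: "nat \<Rightarrow> (nat \<Rightarrow> btype measure) \<Rightarrow> (profile \<Rightarrow> nat \<Rightarrow> real) \<Rightarrow> (profile \<Rightarrow> nat \<Rightarrow> real) \<Rightarrow> nat \<Rightarrow> btype \<Rightarrow> btype \<Rightarrow> real" where
  "interim_util n F x p i th t =
     Eoth n F i (\<lambda>s. fst t * x s i - (\<Sum>j\<in>{..<n} - {i}. snd (s j) i * x s j) - p s i) th"

definition BNIC :: "nat \<Rightarrow> (nat \<Rightarrow> real) \<Rightarrow> (nat \<Rightarrow> real) \<Rightarrow> (nat \<Rightarrow> nat \<Rightarrow> real) \<Rightarrow> (nat \<Rightarrow> nat \<Rightarrow> real) \<Rightarrow> (nat \<Rightarrow> btype measure) \<Rightarrow> (profile \<Rightarrow> nat \<Rightarrow> real) \<Rightarrow> (profile \<Rightarrow> nat \<Rightarrow> real) \<Rightarrow> bool" where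
  "BNIC n vl vh el eh F x p \<longleftrightarrow>
     (\<forall>i\<in>{..<n}. \<forall>t\<in>type_set n vl vh el eh i. \<forall>th\<in>type_set n vl vh el eh i.
        interim_util n F x p i th t \<le> interim_util n F x p i t t)"

definition yexp :: "nat \<Rightarrow> (nat \<Rightarrow> btype measure) \<Rightarrow> (profile \<Rightarrow> nat \<Rightarrow> real) \<Rightarrow> nat \<Rightarrow> btype \<Rightarrow> real" where
  "yexp n F x i th = Eoth n F i (\<lambda>s. x s i) th"

definition qexp :: "nat \<Rightarrow> (nat \<Rightarrow> btype measure) \<Rightarrow> (profile \<Rightarrow> nat \<Rightarrow> real) \<Rightarrow> nat \<Rightarrow> btype \<Rightarrow> real" where
  "qexp n F p i th = Eoth n F i (\<lambda>s. p s i) th"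

definition eexp :: "nat \<Rightarrow> (nat \<Rightarrow> btype measure) \<Rightarrow> (profile \<Rightarrow> nat \<Rightarrow> real) \<Rightarrow> nat \<Rightarrow> btype \<Rightarrow> real" where
  "eexp n F x i th = (\<Sum>j\<in>{..<n} - {i}. Eoth n F i (\<lambda>s. snd (s j) i * x s j) th)"

end

theory Submission
  imports Defs
begin

text \<open>Bidder i's reported externality parameters enter her interim utility only through the
  term e_i, which does not depend on her true type, so V_i(t';t) = v y_i(t') - e_i(t') - q_i(t')
  is affine in her true value v. Incentive compatibility therefore yields the envelope
  inequality U v + (w - v) y_i(v, eta) <= U w for the truthful utility U. Comparing it for
  (v, w) and (w, v) shows that y_i is monotone in v and independent of eta except at
  countably many values (each such value is separated by its own rational); and it squeezes
  U w - U v between (w - v) y(v) and (w - v) y(w), which on a fine partition forces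
  U v = U vl + integral of y. Conversely, under the stated payment rule the truthful utility
  is the integral of a monotone function and hence lies above each of its supporting lines,
  which is exactly incentive compatibility.\<close>

lemma mono_on_integral_bounds:
  fixes g :: "real \<Rightarrow> real"
  assumes mono: "mono_on {v..w} g" and "v \<le> w"
  shows "(w - v) * g v \<le> integral {v..w} g" and "integral {v..w} g \<le> (w - v) * g w"
proof -
  have int: "g integrable_on {v..w}"
    using mono by (rule integrable_on_mono_on)
  have "integral {v..w} (\<lambda>_. g v) \<le> integral {v..w} g"
    by (rule integral_le[OF _ int]) (auto intro!: mono_onD[OF mono])
  then show "(w - v) * g v \<le> integral {v..w} g"
    using \<open>v \<le> w\<close> by (simp add: content_real)
  have "integral {v..w} g \<le> integral {v..w} (\<lambda>_. g w)"
    by (rule integral_le[OF int]) (auto intro!: mono_onD[OF mono])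
  then show "integral {v..w} g \<le> (w - v) * g w"
    using \<open>v \<le> w\<close> by (simp add: content_real)
qed

lemma mono_on_integral_diff:
  fixes g :: "real \<Rightarrow> real"
  assumes "mono_on {a..b} g" "a \<le> v" "v \<le> w" "w \<le> b"
  shows "integral {a..w} g - integral {a..v} g = integral {v..w} g"
proof -
  have int: "g integrable_on {a..w}"
    using assms by (intro integrable_on_mono_on mono_on_subset[OF assms(1)]) auto
  show ?thesis
    using Henstock_Kurzweil_Integration.integral_combine[OF assms(2,3) int] by simp
qed

lemma increment_bound_telescope:
  fixes H g :: "real \<Rightarrow> real"
  assumes bound: "\<And>v w. a \<le> v \<Longrightarrow> v \<le> w \<Longrightarrow> w \<le> b \<Longrightarrow> \<bar>H w - H v\<bar> \<le> (w - v) * (g w - g v)"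
    and "a \<le> v" "0 \<le> h" "v + real m * h \<le> b"
  shows "\<bar>H (v + real m * h) - H v\<bar> \<le> h * (g (v + real m * h) - g v)"
  using \<open>v + real m * h \<le> b\<close>
proof (induction m)
  case 0
  then show ?case by simp
next
  case (Suc m)
  let ?u = "v + real m * h" and ?w = "v + real (Suc m) * h"
  have "?u \<le> ?w" "?w - ?u = h"
    using \<open>0 \<le> h\<close> by (auto simp: algebra_simps)
  moreover have "a \<le> ?u"
    using \<open>a \<le> v\<close> \<open>0 \<le> h\<close> by (simp add: add_increasing2)
  moreover have "?u \<le> b"
    using Suc.prems \<open>?u \<le> ?w\<close> by linarith
  ultimately have "\<bar>H ?w - H ?u\<bar> \<le> h * (g ?w - g ?u)"
    using bound[of ?u ?w] Suc.prems by simp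
  moreover have "\<bar>H ?u - H v\<bar> \<le> h * (g ?u - g v)"
    using Suc.IH \<open>?u \<le> b\<close> by simp
  ultimately show ?case
    by (simp add: algebra_simps abs_le_iff)
qed

text \<open>Splitting [v, w] into m equal pieces, the telescoped bound is (w - v) (g w - g v) / m,
  which tends to zero.\<close>
lemma increment_bound_imp_eq:
  fixes H g :: "real \<Rightarrow> real"
  assumes mono: "mono_on {a..b} g"
    and bound: "\<And>v w. a \<le> v \<Longrightarrow> v \<le> w \<Longrightarrow> w \<le> b \<Longrightarrow> \<bar>H w - H v\<bar> \<le> (w - v) * (g w - g v)"
    and "a \<le> v" "v \<le> w" "w \<le> b"
  shows "H w = H v"
proof (rule ccontr)
  assume "H w \<noteq> H v"
  then have pos: "\<bar>H w - H v\<bar> > 0" by simp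
  obtain m :: nat where m: "real m > (w - v) * (g w - g v) / \<bar>H w - H v\<bar>"
    using reals_Archimedean2 by blast
  have "g v \<le> g w"
    using mono_onD[OF mono] assms(3-5) by auto
  then have "m > 0"
    using m pos \<open>v \<le> w\<close> by (metis divide_nonneg_pos mult_nonneg_nonneg diff_ge_0_iff_ge not_less of_nat_0 gr0I)
  define h where "h = (w - v) / real m"
  have "v + real m * h = w" "0 \<le> h"
    using \<open>m > 0\<close> \<open>v \<le> w\<close> by (auto simp: h_def)
  then have "\<bar>H w - H v\<bar> \<le> h * (g w - g v)"
    using increment_bound_telescope[of a b H g v h m] bound \<open>a \<le> v\<close> \<open>w \<le> b\<close> by simp
  then have "\<bar>H w - H v\<bar> * real m \<le> (w - v) * (g w - g v)"
    using \<open>m > 0\<close> by (simp add: h_def field_simps)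
  moreover have "(w - v) * (g w - g v) < real m * \<bar>H w - H v\<bar>"
    using m pos by (simp add: divide_less_eq)
  ultimately show False
    by (simp add: mult.commute)
qed

lemma mono_on_integral_supporting_line:
  fixes g :: "real \<Rightarrow> real"
  assumes mono: "mono_on {a..b} g" and "v \<in> {a..b}" "w \<in> {a..b}"
  shows "(v - w) * g w \<le> integral {a..v} g - integral {a..w} g"
proof (cases "w \<le> v")
  case True
  then show ?thesis
    using mono_on_integral_bounds(1)[OF mono_on_subset[OF mono], of w v]
      mono_on_integral_diff[OF mono, of w v] assms by auto
next
  case False
  then have "integral {a..w} g - integral {a..v} g \<le> (w - v) * g w"
    using mono_on_integral_bounds(2)[OF mono_on_subset[OF mono], of v w]
      mono_on_integral_diff[OF mono, of v w] assms by auto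
  then show ?thesis
    by (simp add: algebra_simps)
qed

text \<open>U v is the truthful interim utility at value v and Y v e the interim allocation of the
  report (v, e); the left side of the envelope inequality is the utility of value w
  reporting (v, e).\<close>
locale myerson_envelope =
  fixes a b :: real and E :: "'e set" and U :: "real \<Rightarrow> real" and Y :: "real \<Rightarrow> 'e \<Rightarrow> real"
  assumes envelope: "\<And>v w e. v \<in> {a..b} \<Longrightarrow> w \<in> {a..b} \<Longrightarrow> e \<in> E \<Longrightarrow> U v + (w - v) * Y v e \<le> U w"
begin

lemma Y_le:
  assumes "v \<in> {a..b}" "w \<in> {a..b}" "v < w" "e \<in> E" "e' \<in> E"
  shows "Y v e \<le> Y w e'"
proof -
  have "U v + (w - v) * Y v e \<le> U w" "U w + (v - w) * Y w e' \<le> U v"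
    using envelope assms by blast+
  then have "(w - v) * (Y v e - Y w e') \<le> 0"
    by (simp add: algebra_simps)
  then show ?thesis
    using \<open>v < w\<close> by (simp add: mult_le_0_iff)
qed

lemma mono_on_Y:
  assumes "e \<in> E"
  shows "mono_on {a..b} (\<lambda>v. Y v e)"
  by (rule mono_onI) (metis Y_le assms order.order_iff_strict order_refl)

text \<open>A value v at which Y v disagrees across E separates two values of Y v by a rational r;
  by Y_le at most one value is separated by a given r.\<close>
lemma countable_disagreement:
  assumes "e0 \<in> E"
  shows "countable {v\<in>{a..b}. \<exists>e\<in>E. Y v e \<noteq> Y v e0}"
proof -
  define S where "S r = {v\<in>{a..b}. \<exists>e\<in>E. \<exists>e'\<in>E. Y v e < r \<and> r < Y v e'}" for r
  have "{v\<in>{a..b}. \<exists>e\<in>E. Y v e \<noteq> Y v e0} \<subseteq> (\<Union>r\<in>\<rat>. S r)"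
  proof
    fix v assume "v \<in> {v\<in>{a..b}. \<exists>e\<in>E. Y v e \<noteq> Y v e0}"
    then obtain e where v: "v \<in> {a..b}" "e \<in> E" "Y v e \<noteq> Y v e0" by blast
    then consider "Y v e < Y v e0" | "Y v e0 < Y v e" by linarith
    then show "v \<in> (\<Union>r\<in>\<rat>. S r)"
    proof cases
      case 1
      with Rats_dense_in_real obtain r where "r \<in> \<rat>" "Y v e < r" "r < Y v e0" by blast
      then show ?thesis using v assms by (auto simp: S_def)
    next
      case 2
      with Rats_dense_in_real obtain r where "r \<in> \<rat>" "Y v e0 < r" "r < Y v e" by blast
      then show ?thesis using v assms by (auto simp: S_def)
    qed
  qed
  moreover have "S r \<subseteq> {v}" if "v \<in> S r" for r v
  proof
    fix w assume "w \<in> S r"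
    with \<open>v \<in> S r\<close> obtain e1 e1' e2 e2' where
      "v \<in> {a..b}" "w \<in> {a..b}" "e1 \<in> E" "e1' \<in> E" "e2 \<in> E" "e2' \<in> E"
      "Y v e1 < r" "r < Y v e1'" "Y w e2 < r" "r < Y w e2'"
      by (auto simp: S_def)
    then have "\<not> v < w" "\<not> w < v"
      using Y_le[of v w e1' e2] Y_le[of w v e2' e1] by linarith+
    then show "w \<in> {v}" by simp
  qed
  then have "countable (S r)" for r
    by (metis countable_empty countable_insert countable_subset equals0I)
  then have "countable (\<Union>r\<in>\<rat>. S r)"
    by (intro countable_UN[OF countable_rat])
  ultimately show ?thesis
    using countable_subset by blast
qed

lemma U_eq_integral:
  assumes "e0 \<in> E" "v \<in> {a..b}"
  shows "U v = U a + integral {a..v} (\<lambda>v. Y v e0)"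
proof -
  let ?g = "\<lambda>v. Y v e0"
  define H where "H v = U v - integral {a..v} ?g" for v
  have mono: "mono_on {a..b} ?g"
    using mono_on_Y[OF \<open>e0 \<in> E\<close>] .
  have "\<bar>H w - H u\<bar> \<le> (w - u) * (?g w - ?g u)" if "a \<le> u" "u \<le> w" "w \<le> b" for u w
  proof -
    have "(w - u) * ?g u \<le> integral {a..w} ?g - integral {a..u} ?g"
      and "integral {a..w} ?g - integral {a..u} ?g \<le> (w - u) * ?g w"
      using mono_on_integral_bounds[OF mono_on_subset[OF mono], of u w]
        mono_on_integral_diff[OF mono that] that by auto
    moreover have "U u + (w - u) * ?g u \<le> U w" "U w + (u - w) * ?g w \<le> U u"
      using envelope \<open>e0 \<in> E\<close> that by auto
    ultimately show ?thesis
      unfolding H_def by (simp add: algebra_simps abs_le_iff)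
  qed
  then have "H v = H a"
    using increment_bound_imp_eq[OF mono] assms(2) by auto
  then show ?thesis
    by (simp add: H_def)
qed

end

locale scenario2 =
  fixes n :: nat
    and vl vh :: "nat \<Rightarrow> real"
    and el eh :: "nat \<Rightarrow> nat \<Rightarrow> real"
    and F :: "nat \<Rightarrow> btype measure"
    and x p :: "profile \<Rightarrow> nat \<Rightarrow> real"
  assumes bounds_eta: "\<And>i j. i < n \<Longrightarrow> j < n \<Longrightarrow> j \<noteq> i \<Longrightarrow> 0 \<le> el j i \<and> el j i \<le> eh j i"
    and prior: "\<And>i. i < n \<Longrightarrow> prob_space (F i)"
    and prior_space: "\<And>i. i < n \<Longrightarrow> space (F i) = type_set n vl vh el eh i"
    and eta_meas: "\<And>i j. i < n \<Longrightarrow> j < n \<Longrightarrow> j \<noteq> i \<Longrightarrow> (\<lambda>t. snd t j) \<in> borel_measurable (F i)"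
    and x_range: "\<And>t i. i < n \<Longrightarrow> 0 \<le> x t i \<and> x t i \<le> 1"
    and x_meas: "\<And>i j th. i < n \<Longrightarrow> j < n \<Longrightarrow> th \<in> type_set n vl vh el eh i \<Longrightarrow>
        (\<lambda>s. x (s(i := th)) j) \<in> borel_measurable (PiM ({..<n} - {i}) F)"
    and p_integrable: "\<And>i th. i < n \<Longrightarrow> th \<in> type_set n vl vh el eh i \<Longrightarrow>
        integrable (PiM ({..<n} - {i}) F) (\<lambda>s. p (s(i := th)) i)"
begin

lemma prob_space_others: "i < n \<Longrightarrow> prob_space (PiM ({..<n} - {i}) F)"
  by (rule prob_space_PiM) (use prior in auto)

lemma integrable_allocation:
  assumes "i < n" "j < n" "th \<in> type_set n vl vh el eh i"
  shows "integrable (PiM ({..<n} - {i}) F) (\<lambda>s. x (s(i := th)) j)"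
proof -
  interpret prob_space "PiM ({..<n} - {i}) F"
    using prob_space_others \<open>i < n\<close> .
  show ?thesis
    by (rule integrable_const_bound[where B=1]) (use x_range x_meas assms in auto)
qed

lemma integrable_externality:
  assumes i: "i < n" and j: "j \<in> {..<n} - {i}" and th: "th \<in> type_set n vl vh el eh i"
  shows "integrable (PiM ({..<n} - {i}) F) (\<lambda>s. snd ((s(i := th)) j) i * x (s(i := th)) j)"
proof -
  let ?M = "PiM ({..<n} - {i}) F"
  interpret prob_space ?M
    using prob_space_others i .
  have "(\<lambda>s. snd (s j) i) \<in> borel_measurable ?M"
    using measurable_compose[OF measurable_component_singleton[of j "{..<n} - {i}" F] eta_meas[of j i]] i j
    by auto
  moreover have "(\<lambda>s. x (s(i := th)) j) \<in> borel_measurable ?M"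
    using x_meas i j th by auto
  moreover have "\<bar>snd (s j) i * x (s(i := th)) j\<bar> \<le> eh i j" if "s \<in> space ?M" for s
  proof -
    have "s j \<in> space (F j)"
      using that j by (auto simp: space_PiM)
    then have "snd (s j) \<in> Eta_set n el eh j"
      using prior_space j by (auto simp: type_set_def)
    moreover have "i \<in> {..<n} - {j}"
      using i j by auto
    ultimately have eta: "snd (s j) i \<in> {el i j .. eh i j}"
      unfolding Eta_set_def by (rule PiE_mem)
    have "0 \<le> el i j"
      using bounds_eta[of j i] i j by auto
    then have "0 \<le> snd (s j) i" "snd (s j) i \<le> eh i j"
      using eta by auto
    moreover have "0 \<le> x (s(i := th)) j" "x (s(i := th)) j \<le> 1"
      using x_range j by auto
    ultimately show ?thesis
      using mult_left_le[of "x (s(i := th)) j" "snd (s j) i"] by (simp add: abs_mult)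
  qed
  ultimately have "integrable ?M (\<lambda>s. snd (s j) i * x (s(i := th)) j)"
    by (intro integrable_const_bound[where B="eh i j"]) auto
  then show ?thesis
    using j by simp
qed

lemma interim_util_eq:
  assumes i: "i < n" and th: "th \<in> type_set n vl vh el eh i"
  shows "interim_util n F x p i th t = fst t * yexp n F x i th - eexp n F x i th - qexp n F p i th"
proof -
  let ?M = "PiM ({..<n} - {i}) F"
  let ?X = "\<lambda>s. fst t * x (s(i := th)) i"
  let ?S = "\<lambda>s. \<Sum>j\<in>{..<n} - {i}. snd ((s(i := th)) j) i * x (s(i := th)) j"
  let ?P = "\<lambda>s. p (s(i := th)) i"
  have ext: "integrable ?M (\<lambda>s. snd ((s(i := th)) j) i * x (s(i := th)) j)" if "j \<in> {..<n} - {i}" for j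
    using integrable_externality[OF i that th] .
  have int_X: "integrable ?M ?X"
    using integrable_allocation[OF i i th] by simp
  have int_S: "integrable ?M ?S"
    using ext by (intro Bochner_Integration.integrable_sum) blast
  have int_P: "integrable ?M ?P"
    using p_integrable[OF i th] .
  have "interim_util n F x p i th t = (\<integral>s. ?X s - ?S s - ?P s \<partial>?M)"
    unfolding interim_util_def Eoth_def by simp
  also have "\<dots> = (\<integral>s. ?X s \<partial>?M) - (\<integral>s. ?S s \<partial>?M) - (\<integral>s. ?P s \<partial>?M)"
    using int_X int_S int_P by simp
  also have "(\<integral>s. ?S s \<partial>?M) = eexp n F x i th"
    unfolding eexp_def Eoth_def using ext by (intro Bochner_Integration.integral_sum) blast
  also have "(\<integral>s. ?X s \<partial>?M) = fst t * yexp n F x i th"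
    unfolding yexp_def Eoth_def by simp
  finally show ?thesis
    unfolding qexp_def Eoth_def .
qed

lemma yexp_range:
  assumes i: "i < n" and th: "th \<in> type_set n vl vh el eh i"
  shows "0 \<le> yexp n F x i th \<and> yexp n F x i th \<le> 1"
proof -
  let ?M = "PiM ({..<n} - {i}) F"
  interpret prob_space ?M
    using prob_space_others i .
  have "0 \<le> (\<integral>s. x (s(i := th)) i \<partial>?M)"
    by (rule integral_nonneg_AE) (use x_range i in auto)
  moreover have "(\<integral>s. x (s(i := th)) i \<partial>?M) \<le> (\<integral>s. 1 \<partial>?M)"
    by (rule integral_mono[OF integrable_allocation[OF i i th]]) (use x_range i in auto)
  ultimately show ?thesis
    by (simp add: yexp_def Eoth_def prob_space)
qed

lemma lowest_eta_in_Eta_set: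
  assumes "i < n"
  shows "(\<lambda>j\<in>{..<n} - {i}. el j i) \<in> Eta_set n el eh i"
  using bounds_eta assms by (auto simp: Eta_set_def)

lemma bnic_truthful_util_eq:
  assumes bnic: "BNIC n vl vh el eh F x p" and i: "i < n"
    and t: "t \<in> type_set n vl vh el eh i" and t': "t' \<in> type_set n vl vh el eh i"
    and "fst t = fst t'"
  shows "interim_util n F x p i t t = interim_util n F x p i t' t'"
proof -
  have "interim_util n F x p i t' t' = interim_util n F x p i t' t"
    and "interim_util n F x p i t t = interim_util n F x p i t t'"
    using interim_util_eq[OF i t] interim_util_eq[OF i t'] \<open>fst t = fst t'\<close> by simp_all
  moreover have "interim_util n F x p i t' t \<le> interim_util n F x p i t t"
    and "interim_util n F x p i t t' \<le> interim_util n F x p i t' t'"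
    using bnic i t t' unfolding BNIC_def by auto
  ultimately show ?thesis
    by linarith
qed

lemma bnic_imp_myerson_envelope:
  assumes bnic: "BNIC n vl vh el eh F x p" and i: "i < n" and e0: "e0 \<in> Eta_set n el eh i"
  shows "myerson_envelope (vl i) (vh i) (Eta_set n el eh i)
           (\<lambda>v. interim_util n F x p i (v, e0) (v, e0)) (\<lambda>v e. yexp n F x i (v, e))"
proof
  fix v w e assume v: "v \<in> {vl i..vh i}" and w: "w \<in> {vl i..vh i}" and e: "e \<in> Eta_set n el eh i"
  have T: "(v, e) \<in> type_set n vl vh el eh i" "(v, e0) \<in> type_set n vl vh el eh i"
    "(w, e0) \<in> type_set n vl vh el eh i"
    using v w e e0 by (auto simp: type_set_def)
  have "interim_util n F x p i (v, e0) (v, e0) + (w - v) * yexp n F x i (v, e)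
        = interim_util n F x p i (v, e) (v, e) + (w - v) * yexp n F x i (v, e)"
    using bnic_truthful_util_eq[OF bnic i T(2,1)] by simp
  also have "\<dots> = interim_util n F x p i (v, e) (w, e0)"
    using interim_util_eq[OF i T(1), of "(v, e)"] interim_util_eq[OF i T(1), of "(w, e0)"]
    by (simp add: algebra_simps)
  also have "\<dots> \<le> interim_util n F x p i (w, e0) (w, e0)"
    using bnic i T unfolding BNIC_def by blast
  finally show "interim_util n F x p i (v, e0) (v, e0) + (w - v) * yexp n F x i (v, e)
                \<le> interim_util n F x p i (w, e0) (w, e0)" .
qed

lemma bnic_necessary:
  assumes bnic: "BNIC n vl vh el eh F x p" and i: "i < n"
  shows "\<exists>ytil Vtil.
          mono_on {vl i .. vh i} ytil \<and>
          (\<forall>v\<in>{vl i .. vh i}. 0 \<le> ytil v \<and> ytil v \<le> 1) \<and>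
          (\<exists>C. countable C \<and>
             (\<forall>v\<in>{vl i .. vh i} - C. \<forall>eta\<in>Eta_set n el eh i. yexp n F x i (v, eta) = ytil v)) \<and>
          (\<forall>t\<in>type_set n vl vh el eh i. interim_util n F x p i t t = Vtil (fst t)) \<and>
          (\<forall>t\<in>type_set n vl vh el eh i.
             qexp n F p i t = fst t * yexp n F x i t - integral {vl i .. fst t} ytil
                              - eexp n F x i t - Vtil (vl i))"
proof -
  define e0 where "e0 = (\<lambda>j\<in>{..<n} - {i}. el j i)"
  have e0: "e0 \<in> Eta_set n el eh i"
    unfolding e0_def using lowest_eta_in_Eta_set[OF i] .
  define U where "U v = interim_util n F x p i (v, e0) (v, e0)" for v
  define ytil where "ytil = (\<lambda>v. yexp n F x i (v, e0))"
  interpret myerson_envelope "vl i" "vh i" "Eta_set n el eh i" U "\<lambda>v e. yexp n F x i (v, e)"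
    unfolding U_def using bnic_imp_myerson_envelope[OF bnic i e0] .
  have T: "(v, e) \<in> type_set n vl vh el eh i \<longleftrightarrow> v \<in> {vl i..vh i} \<and> e \<in> Eta_set n el eh i" for v e
    by (simp add: type_set_def)
  have V: "interim_util n F x p i t t = U (fst t)" if t: "t \<in> type_set n vl vh el eh i" for t
    using bnic_truthful_util_eq[OF bnic i t, of "(fst t, e0)"] t e0
    by (cases t) (simp add: T U_def)
  have "qexp n F p i t = fst t * yexp n F x i t - integral {vl i .. fst t} ytil - eexp n F x i t - U (vl i)"
    if t: "t \<in> type_set n vl vh el eh i" for t
    using interim_util_eq[OF i t, of t] V[OF t] U_eq_integral[OF e0, of "fst t"] t
    by (cases t) (simp add: T ytil_def)
  moreover obtain C where "countable C" "\<forall>v\<in>{vl i..vh i} - C. \<forall>e\<in>Eta_set n el eh i. yexp n F x i (v, e) = ytil v"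
    using countable_disagreement[OF e0] unfolding ytil_def by blast
  moreover have "\<forall>v\<in>{vl i .. vh i}. 0 \<le> ytil v \<and> ytil v \<le> 1"
    using yexp_range[OF i] e0 by (simp add: T ytil_def)
  moreover have "mono_on {vl i .. vh i} ytil"
    unfolding ytil_def using mono_on_Y[OF e0] .
  ultimately show ?thesis
    using V by blast
qed

lemma bnic_sufficient:
  assumes "\<forall>i<n. \<exists>ytil C.
          mono_on {vl i .. vh i} ytil \<and>
          (\<forall>v\<in>{vl i .. vh i}. 0 \<le> ytil v \<and> ytil v \<le> 1) \<and>
          (\<forall>t\<in>type_set n vl vh el eh i. yexp n F x i t = ytil (fst t)) \<and>
          (\<forall>t\<in>type_set n vl vh el eh i.
             qexp n F p i t = fst t * ytil (fst t) - integral {vl i .. fst t} ytil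
                              - eexp n F x i t - C)"
  shows "BNIC n vl vh el eh F x p"
  unfolding BNIC_def
proof (intro ballI)
  fix i t th
  assume "i \<in> {..<n}" and t: "t \<in> type_set n vl vh el eh i" and th: "th \<in> type_set n vl vh el eh i"
  then have i: "i < n" by simp
  then obtain g C where mono: "mono_on {vl i .. vh i} g"
    and y: "\<forall>t\<in>type_set n vl vh el eh i. yexp n F x i t = g (fst t)"
    and q: "\<forall>t\<in>type_set n vl vh el eh i.
              qexp n F p i t = fst t * g (fst t) - integral {vl i .. fst t} g - eexp n F x i t - C"
    using assms by blast
  have "fst t \<in> {vl i .. vh i}" "fst th \<in> {vl i .. vh i}"
    using t th by (auto simp: type_set_def)
  then have "(fst t - fst th) * g (fst th) \<le> integral {vl i .. fst t} g - integral {vl i .. fst th} g"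
    by (rule mono_on_integral_supporting_line[OF mono])
  then show "interim_util n F x p i th t \<le> interim_util n F x p i t t"
    using interim_util_eq[OF i th, of t] interim_util_eq[OF i t, of t] y q t th
    by (simp add: algebra_simps)
qed

end

theorem mainTheorem8:
  fixes n :: nat
    and vl vh :: "nat \<Rightarrow> real"
    and el eh :: "nat \<Rightarrow> nat \<Rightarrow> real"
    and F :: "nat \<Rightarrow> btype measure"
    and x p :: "profile \<Rightarrow> nat \<Rightarrow> real"
  assumes bounds_v: "\<And>i. i < n \<Longrightarrow> 0 \<le> vl i \<and> vl i \<le> vh i"
    and bounds_eta: "\<And>i j. i < n \<Longrightarrow> j < n \<Longrightarrow> j \<noteq> i \<Longrightarrow> 0 \<le> el j i \<and> el j i \<le> eh j i"
    and prior: "\<And>i. i < n \<Longrightarrow> prob_space (F i)"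
    and prior_space: "\<And>i. i < n \<Longrightarrow> space (F i) = type_set n vl vh el eh i"
    and eta_meas: "\<And>i j. i < n \<Longrightarrow> j < n \<Longrightarrow> j \<noteq> i \<Longrightarrow> (\<lambda>t. snd t j) \<in> borel_measurable (F i)"
    and x_range: "\<And>t i. i < n \<Longrightarrow> 0 \<le> x t i \<and> x t i \<le> 1"
    and p_nonneg: "\<And>t i. i < n \<Longrightarrow> 0 \<le> p t i"
    and x_meas: "\<And>i j th. i < n \<Longrightarrow> j < n \<Longrightarrow> th \<in> type_set n vl vh el eh i \<Longrightarrow>
        (\<lambda>s. x (s(i := th)) j) \<in> borel_measurable (PiM ({..<n} - {i}) F)"
    and p_integrable: "\<And>i th. i < n \<Longrightarrow> th \<in> type_set n vl vh el eh i \<Longrightarrow>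
        integrable (PiM ({..<n} - {i}) F) (\<lambda>s. p (s(i := th)) i)"
  shows
    "(BNIC n vl vh el eh F x p \<longrightarrow>
       (\<forall>i<n. \<exists>ytil Vtil.
          mono_on {vl i .. vh i} ytil \<and>
          (\<forall>v\<in>{vl i .. vh i}. 0 \<le> ytil v \<and> ytil v \<le> 1) \<and>
          (\<exists>C. countable C \<and>
             (\<forall>v\<in>{vl i .. vh i} - C. \<forall>eta\<in>Eta_set n el eh i. yexp n F x i (v, eta) = ytil v)) \<and>
          (\<forall>t\<in>type_set n vl vh el eh i. interim_util n F x p i t t = Vtil (fst t)) \<and>
          (\<forall>t\<in>type_set n vl vh el eh i.
             qexp n F p i t = fst t * yexp n F x i t - integral {vl i .. fst t} ytil
                              - eexp n F x i t - Vtil (vl i)))) \<and>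
     ((\<forall>i<n. \<exists>ytil C.
          mono_on {vl i .. vh i} ytil \<and>
          (\<forall>v\<in>{vl i .. vh i}. 0 \<le> ytil v \<and> ytil v \<le> 1) \<and>
          (\<forall>t\<in>type_set n vl vh el eh i. yexp n F x i t = ytil (fst t)) \<and>
          (\<forall>t\<in>type_set n vl vh el eh i.
             qexp n F p i t = fst t * ytil (fst t) - integral {vl i .. fst t} ytil
                              - eexp n F x i t - C))
      \<longrightarrow> BNIC n vl vh el eh F x p)"
proof -
  interpret scenario2 n vl vh el eh F x p
    using scenario2.intro[OF bounds_eta prior prior_space eta_meas x_range x_meas p_integrable] .
  show ?thesis
    using bnic_necessary bnic_sufficient by blast
qed

end
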